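(* Let $X$ be a metrizable, locally compact, separable topological space, $T\colon X\to X$ continuous, and $k\in\mathbb N$. Then $h(T^k)=k\,h(T)$.
   Context: For covers $\mathcal A,\mathcal B$ of $X$, $\mathcal A\vee\mathcal B=\{A\cap B: A\in\mathcal A,B\in\mathcal B,A\cap B\neq\emptyset\}$ and, for a map $S$, $\mathcal A^n_S=\mathcal A\vee S^{-1}(\mathcal A)\vee\dots\vee S^{-(n-1)}(\mathcal A)$. $N(\mathcal A)$ is the least cardinality of a subcover of $\mathcal A$. An open cover is admissible if at least one of its elements has compact complement. The topological entropy of a continuous $S\colon X\to X$ is $h(S)=\sup\{\lim_n\frac1n\log N(\mathcal A^n_S): \mathcal A\text{ admissible open cover of }X\}$. *)

theory Defs
  imports "HOL-Analysis.Analysis"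
begin

definition cover_join :: "'a set set \<Rightarrow> 'a set set \<Rightarrow> 'a set set" where
  "cover_join A B = {a \<inter> b | a b. a \<in> A \<and> b \<in> B \<and> a \<inter> b \<noteq> {}}"

definition cover_preimage :: "'a topology \<Rightarrow> ('a \<Rightarrow> 'a) \<Rightarrow> 'a set set \<Rightarrow> 'a set set" where
  "cover_preimage X S A = (\<lambda>U. {x \<in> topspace X. S x \<in> U}) ` A"

text \<open>cover_iter X S A n is A^n_S = A v S^-1 A v ... v S^-(n-1) A (for n >= 1);
  the case n = 0 is the trivial cover.\<close>
fun cover_iter :: "'a topology \<Rightarrow> ('a \<Rightarrow> 'a) \<Rightarrow> 'a set set \<Rightarrow> nat \<Rightarrow> 'a set set" where
  "cover_iter X S A 0 = {topspace X}"
| "cover_iter X S A (Suc n) = cover_join (cover_iter X S A n) (cover_preimage X (S ^^ n) A)"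

definition cover_num :: "'a topology \<Rightarrow> 'a set set \<Rightarrow> nat" where
  "cover_num X A = (LEAST n. \<exists>B \<subseteq> A. finite B \<and> card B = n \<and> topspace X \<subseteq> \<Union>B)"

definition admissible_open_cover :: "'a topology \<Rightarrow> 'a set set \<Rightarrow> bool" where
  "admissible_open_cover X A \<longleftrightarrow>
     (\<forall>U \<in> A. openin X U) \<and> \<Union>A = topspace X \<and>
     (\<exists>U \<in> A. compactin X (topspace X - U))"

definition top_entropy :: "'a topology \<Rightarrow> ('a \<Rightarrow> 'a) \<Rightarrow> ereal" where
  "top_entropy X S = (SUP A \<in> {A. admissible_open_cover X A}.
      ereal (lim (\<lambda>n. ln (real (cover_num X (cover_iter X S A n))) / real n)))"

end

theory Submission
  imports Defs "HOL-Real_Asymp.Real_Asymp"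
begin

text \<open>
  The members of \<open>A^n_S\<close> are the nonempty itineraries \<open>{x. \<forall>i<n. S^i x \<in> a i}\<close>, and grouping
  the times of a \<open>T\<close>-orbit into blocks of length \<open>k\<close> gives \<open>(A^k_T)^n_(T^k) = A^(nk)_T\<close>.
  As \<open>A^k_T\<close> refines \<open>A\<close>, this yields \<open>h(T^k, A) \<le> k h(T, A)\<close> cover by cover; all the
  limits exist by Fekete's lemma.

  For the converse \<open>A^k_T\<close> itself is useless, as it need not be admissible. If \<open>U0 \<in> A\<close> has
  compact complement \<open>K\<close>, put \<open>L = \<Union>j<kR. T^j K\<close>; then \<open>E = A^k_T \<union> {X - L}\<close> is admissible.
  In a member of \<open>E^(qR)_(T^k)\<close>, the letter \<open>X - L\<close> can be replaced by \<open>U0 \<inter> \<dots> \<inter> T^-(k-1) U0\<close>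
  except in blocks where the orbit enters \<open>K\<close>; after such a block the next \<open>R - 1\<close> blocks start
  in \<open>L\<close>, so every window of \<open>R\<close> blocks contains at most one of them. Recording its
  position and a member of a minimal subcover of \<open>A^k_T\<close> shows
  \<open>N(A^(qRk)_T) \<le> N(E^(qR)_(T^k)) (1 + R N(A^k_T))^q\<close>, hence
  \<open>k h(T, A) \<le> h(T^k, E) + ln (1 + R N(A^k_T)) / R\<close>, and \<open>R \<rightarrow> \<infinity>\<close> finishes the proof.
\<close>

section \<open>Subadditive sequences\<close>

lemma subadditive_mult_add_le:
  fixes u :: "nat \<Rightarrow> real"
  assumes "\<And>m n. u (m + n) \<le> u m + u n"
  shows "u (q * m + r) \<le> real q * u m + u r"
proof (induction q)
  case (Suc q)
  have "u (Suc q * m + r) = u (m + (q * m + r))"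
    by (simp add: algebra_simps)
  also have "\<dots> \<le> u m + u (q * m + r)"
    by (rule assms)
  also have "\<dots> \<le> u m + (real q * u m + u r)"
    using Suc by simp
  finally show ?case
    by (simp add: algebra_simps)
qed simp

lemma subadditive_quotient_le:
  fixes u :: "nat \<Rightarrow> real"
  assumes nonneg: "\<And>n. u n \<ge> 0" and subadd: "\<And>m n. u (m + n) \<le> u m + u n"
    and m: "m > 0" and n: "n > 0"
  shows "u n / real n \<le> u m / real m + Max (u ` {..<m}) / real n"
proof -
  have "u (n div m * m + n mod m) \<le> real (n div m) * u m + u (n mod m)"
    by (rule subadditive_mult_add_le[where u = u, OF subadd])
  moreover have "u (n mod m) \<le> Max (u ` {..<m})"
    using m by (intro Max_ge) auto
  moreover have "real (n div m) * real m \<le> real n"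
    by (metis div_times_less_eq_dividend of_nat_le_iff of_nat_mult)
  then have "real (n div m) * real m * (u m / real m) \<le> real n * (u m / real m)"
    using nonneg[of m] by (intro mult_right_mono) auto
  moreover have "real (n div m) * real m * (u m / real m) = real (n div m) * u m"
    using m by simp
  ultimately have "u n \<le> real n * (u m / real m) + Max (u ` {..<m})"
    by simp
  then show ?thesis
    using n by (simp add: field_simps)
qed

lemma fekete_lemma:
  fixes u :: "nat \<Rightarrow> real"
  assumes nonneg: "\<And>n. u n \<ge> 0" and subadd: "\<And>m n. u (m + n) \<le> u m + u n"
  shows "(\<lambda>n. u n / real n) \<longlonglongrightarrow> Inf ((\<lambda>n. u n / real n) ` {1..})"
proof (rule LIMSEQ_I)
  define L where "L = Inf ((\<lambda>n. u n / real n) ` {1..})"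
  have bdd: "bdd_below ((\<lambda>n. u n / real n) ` {1..})"
    by (rule bdd_belowI[of _ 0]) (use nonneg in auto)
  fix e :: real
  assume e: "e > 0"
  have "L < L + e / 2"
    using e by simp
  then obtain m where m: "m \<ge> 1" "u m / real m < L + e / 2"
    unfolding L_def by (subst (asm) cInf_less_iff) (use bdd in auto)
  define B where "B = Max (u ` {..<m})"
  obtain N where N: "real N > 2 * B / e"
    using reals_Archimedean2 by blast
  show "\<exists>N. \<forall>n\<ge>N. norm (u n / real n - L) < e"
  proof (intro exI[of _ "Suc N"] allI impI)
    fix n
    assume n: "n \<ge> Suc N"
    then have "2 * B / e < real n"
      using N by simp
    then have "B / real n < e / 2"
      using e n by (simp add: field_simps)
    moreover have "u n / real n \<le> u m / real m + B / real n"
      unfolding B_def using m(1) n by (intro subadditive_quotient_le[where u = u, OF nonneg subadd]) auto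
    ultimately have "u n / real n < L + e"
      using m(2) by linarith
    moreover have "L \<le> u n / real n"
      unfolding L_def using bdd n by (intro cInf_lower) auto
    ultimately show "norm (u n / real n - L) < e"
      by simp
  qed
qed

lemma tendsto_mult_index_over_n:
  fixes u :: "nat \<Rightarrow> real"
  assumes "(\<lambda>n. u n / real n) \<longlonglongrightarrow> L" "k > 0"
  shows "(\<lambda>n. u (n * k) / real n) \<longlonglongrightarrow> real k * L"
proof -
  have "strict_mono (\<lambda>n. n * k)"
    using assms(2) by (simp add: strict_mono_def)
  from LIMSEQ_subseq_LIMSEQ[OF assms(1) this]
  have "(\<lambda>n. real k * (u (n * k) / real (n * k))) \<longlonglongrightarrow> real k * L"
    by (intro tendsto_mult tendsto_const) (simp add: o_def)
  then show ?thesis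
    using assms(2) by simp
qed

lemma le_of_tendsto_block_bound:
  fixes u v :: "nat \<Rightarrow> real"
  assumes u: "(\<lambda>n. u n / real n) \<longlonglongrightarrow> a" and v: "(\<lambda>n. v n / real n) \<longlonglongrightarrow> b"
    and k: "k > 0" and R: "R > 0"
    and bound: "\<And>q. u (q * (R * k)) \<le> v (q * R) + real q * c"
  shows "real k * a \<le> b + c / real R"
proof -
  have "(\<lambda>q. u (q * (R * k)) / real q) \<longlonglongrightarrow> real (R * k) * a"
    using k R by (intro tendsto_mult_index_over_n[OF u]) simp
  moreover have "(\<lambda>q. v (q * R) / real q + c) \<longlonglongrightarrow> real R * b + c"
    by (intro tendsto_add tendsto_const tendsto_mult_index_over_n[OF v R])
  moreover have "u (q * (R * k)) / real q \<le> v (q * R) / real q + c" if "q \<ge> 1" for q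
  proof -
    have "u (q * (R * k)) / real q \<le> (v (q * R) + real q * c) / real q"
      using bound[of q] by (simp add: divide_right_mono)
    then show ?thesis
      using that by (simp add: add_divide_distrib)
  qed
  ultimately have "real (R * k) * a \<le> real R * b + c"
    by (intro LIMSEQ_le) auto
  then show ?thesis
    using R by (simp add: field_simps)
qed

lemma ln_one_plus_mult_over_tendsto_zero:
  assumes "c \<ge> 0"
  shows "(\<lambda>R. ln (1 + real R * c) / real R) \<longlonglongrightarrow> 0"
proof (cases "c = 0")
  case False
  with assms have "c > 0"
    by simp
  then show ?thesis
    by real_asymp
qed simp

lemma ln_of_nat_nonneg: "0 \<le> ln (real (a :: nat))"
  by (cases "a = 0") auto

lemma ln_of_nat_mono: "(a :: nat) \<le> b \<Longrightarrow> ln (real a) \<le> ln (real b)"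
  by (cases "a = 0") (auto simp: ln_of_nat_nonneg)

lemma ln_of_nat_mult_le: "ln (real (a * b)) \<le> ln (real a) + ln (real (b :: nat))"
  by (cases "a = 0 \<or> b = 0") (auto simp: ln_of_nat_nonneg ln_mult)

section \<open>Covers and their iterated joins\<close>

definition finitely_coverable :: "'a topology \<Rightarrow> 'a set set \<Rightarrow> bool" where
  "finitely_coverable X C \<longleftrightarrow> (\<exists>B\<subseteq>C. finite B \<and> topspace X \<subseteq> \<Union>B)"

definition refines :: "'a set set \<Rightarrow> 'a set set \<Rightarrow> bool" where
  "refines C' C \<longleftrightarrow> (\<forall>c'\<in>C'. \<exists>c\<in>C. c' \<subseteq> c)"

lemma cover_num_le_card:
  assumes "B \<subseteq> C" "finite B" "topspace X \<subseteq> \<Union>B"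
  shows "cover_num X C \<le> card B"
  unfolding cover_num_def by (rule Least_le) (use assms in blast)

lemma obtain_minimal_subcover:
  assumes "finitely_coverable X C"
  obtains B where "B \<subseteq> C" "finite B" "card B = cover_num X C" "topspace X \<subseteq> \<Union>B"
proof -
  have "\<exists>n. \<exists>B \<subseteq> C. finite B \<and> card B = n \<and> topspace X \<subseteq> \<Union>B"
    using assms unfolding finitely_coverable_def by blast
  from LeastI_ex[OF this] show ?thesis
    using that unfolding cover_num_def by blast
qed

lemma finite_indexed_subcover:
  assumes "finite P" "\<And>p. p \<in> P \<Longrightarrow> f p \<noteq> {} \<Longrightarrow> f p \<in> C" "topspace X \<subseteq> \<Union>(f ` P)"
  shows "finitely_coverable X C" and "cover_num X C \<le> card P"
proof -
  have sub: "f ` P - {{}} \<subseteq> C" "finite (f ` P - {{}})" "topspace X \<subseteq> \<Union>(f ` P - {{}})"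
    using assms by blast+
  then show "finitely_coverable X C"
    unfolding finitely_coverable_def by blast
  have "card (f ` P - {{}}) \<le> card P"
    using assms(1) by (meson Diff_subset card_image_le card_mono finite_imageI le_trans)
  then show "cover_num X C \<le> card P"
    using cover_num_le_card[OF sub] by linarith
qed

lemma cover_num_le_if_refines:
  assumes "refines C' C" "finitely_coverable X C'"
  shows "cover_num X C \<le> cover_num X C'"
proof -
  obtain B' where B': "B' \<subseteq> C'" "finite B'" "card B' = cover_num X C'" "topspace X \<subseteq> \<Union>B'"
    using obtain_minimal_subcover[OF assms(2)] by metis
  obtain \<rho> where \<rho>: "\<And>c'. c' \<in> C' \<Longrightarrow> \<rho> c' \<in> C \<and> c' \<subseteq> \<rho> c'"
    using assms(1) unfolding refines_def by metis
  have "cover_num X C \<le> card B'"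
    using B' \<rho> by (intro finite_indexed_subcover(2)[where f = \<rho>]) blast+
  with B'(3) show ?thesis
    by simp
qed

definition itinerary :: "'a topology \<Rightarrow> ('a \<Rightarrow> 'a) \<Rightarrow> (nat \<Rightarrow> 'a set) \<Rightarrow> nat \<Rightarrow> 'a set" where
  "itinerary X S a n = {x \<in> topspace X. \<forall>i<n. (S ^^ i) x \<in> a i}"

lemma funpow_in_topspace:
  "S ` topspace X \<subseteq> topspace X \<Longrightarrow> x \<in> topspace X \<Longrightarrow> (S ^^ i) x \<in> topspace X"
  by (induction i) auto

lemma cover_iter_SucI:
  assumes "c \<in> cover_iter X S A n" "U \<in> A" "c \<inter> {x \<in> topspace X. (S ^^ n) x \<in> U} \<noteq> {}"
  shows "c \<inter> {x \<in> topspace X. (S ^^ n) x \<in> U} \<in> cover_iter X S A (Suc n)"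
  using assms unfolding cover_iter.simps cover_join_def cover_preimage_def by blast

lemma cover_iter_SucE:
  assumes "c \<in> cover_iter X S A (Suc n)"
  obtains c' U where "c' \<in> cover_iter X S A n" "U \<in> A"
    "c = c' \<inter> {x \<in> topspace X. (S ^^ n) x \<in> U}" "c \<noteq> {}"
  using assms unfolding cover_iter.simps cover_join_def cover_preimage_def by blast

lemma mem_cover_iter_iff:
  "c \<in> cover_iter X S A n \<longleftrightarrow>
     (\<exists>a. (\<forall>i<n. a i \<in> A) \<and> c = itinerary X S a n \<and> (n > 0 \<longrightarrow> c \<noteq> {}))"
proof (induction n arbitrary: c)
  case 0
  then show ?case
    by (simp add: itinerary_def)
next
  case (Suc n)
  have step: "itinerary X S (a(n := U)) (Suc n) =
      itinerary X S a n \<inter> {x \<in> topspace X. (S ^^ n) x \<in> U}" for a U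
    by (auto simp: itinerary_def less_Suc_eq)
  show ?case
  proof
    assume "c \<in> cover_iter X S A (Suc n)"
    then obtain c' U where "c' \<in> cover_iter X S A n" "U \<in> A" "c \<noteq> {}"
        and c: "c = c' \<inter> {x \<in> topspace X. (S ^^ n) x \<in> U}"
      by (rule cover_iter_SucE)
    moreover from this Suc.IH obtain a where "\<forall>i<n. a i \<in> A" "c' = itinerary X S a n"
      by blast
    ultimately show "\<exists>a. (\<forall>i<Suc n. a i \<in> A) \<and> c = itinerary X S a (Suc n) \<and> (Suc n > 0 \<longrightarrow> c \<noteq> {})"
      by (intro exI[of _ "a(n := U)"]) (auto simp: step less_Suc_eq)
  next
    assume "\<exists>a. (\<forall>i<Suc n. a i \<in> A) \<and> c = itinerary X S a (Suc n) \<and> (Suc n > 0 \<longrightarrow> c \<noteq> {})"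
    then obtain a where a: "\<forall>i<Suc n. a i \<in> A" "c = itinerary X S a (Suc n)" "c \<noteq> {}"
      by blast
    have c: "c = itinerary X S a n \<inter> {x \<in> topspace X. (S ^^ n) x \<in> a n}"
      using step[of a "a n"] a(2) by simp
    then have "itinerary X S a n \<noteq> {}"
      using a(3) by blast
    then have "itinerary X S a n \<in> cover_iter X S A n"
      unfolding Suc.IH using a(1) by (intro exI[of _ a]) auto
    with a(1,3) show "c \<in> cover_iter X S A (Suc n)"
      unfolding c by (intro cover_iter_SucI) auto
  qed
qed

lemma itinerary_in_cover_iter:
  "(\<And>i. i < n \<Longrightarrow> a i \<in> A) \<Longrightarrow> itinerary X S a n \<noteq> {} \<Longrightarrow> itinerary X S a n \<in> cover_iter X S A n"
  unfolding mem_cover_iter_iff by blast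

lemma obtain_itinerary:
  assumes "c \<in> cover_iter X S A n"
  obtains a where "\<forall>i<n. a i \<in> A" "c = itinerary X S a n"
  using assms unfolding mem_cover_iter_iff by blast

lemma itinerary_cong:
  "(\<And>i. i < n \<Longrightarrow> a i = a' i) \<Longrightarrow> itinerary X S a n = itinerary X S a' n"
  by (simp add: itinerary_def)

lemma finitely_coverable_cover_iter:
  assumes A: "finitely_coverable X A" and S: "S ` topspace X \<subseteq> topspace X"
  shows "finitely_coverable X (cover_iter X S A n)"
proof -
  obtain F where F: "F \<subseteq> A" "finite F" "topspace X \<subseteq> \<Union>F"
    using A unfolding finitely_coverable_def by blast
  show ?thesis
  proof (rule finite_indexed_subcover(1)[where P = "PiE {..<n} (\<lambda>_. F)" and f = "\<lambda>a. itinerary X S a n"])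
    show "finite (PiE {..<n} (\<lambda>_. F))"
      using F(2) by (simp add: finite_PiE)
    show "itinerary X S a n \<in> cover_iter X S A n"
      if "a \<in> PiE {..<n} (\<lambda>_. F)" "itinerary X S a n \<noteq> {}" for a
      using that F(1) by (intro itinerary_in_cover_iter) auto
    show "topspace X \<subseteq> \<Union>((\<lambda>a. itinerary X S a n) ` PiE {..<n} (\<lambda>_. F))"
    proof
      fix x
      assume x: "x \<in> topspace X"
      then have "\<forall>i. \<exists>U\<in>F. (S ^^ i) x \<in> U"
        using F(3) funpow_in_topspace[OF S] by blast
      then obtain a where a: "\<And>i. a i \<in> F \<and> (S ^^ i) x \<in> a i"
        by metis
      then have "restrict a {..<n} \<in> PiE {..<n} (\<lambda>_. F)"
        by simp
      moreover have "x \<in> itinerary X S (restrict a {..<n}) n"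
        using a x by (simp add: itinerary_def)
      ultimately show "x \<in> \<Union>((\<lambda>a. itinerary X S a n) ` PiE {..<n} (\<lambda>_. F))"
        by blast
    qed
  qed
qed

lemma refines_cover_iter:
  assumes "refines D A"
  shows "refines (cover_iter X S D n) (cover_iter X S A n)"
proof (induction n)
  case 0
  then show ?case
    by (simp add: refines_def)
next
  case (Suc n)
  show ?case
    unfolding refines_def
  proof
    fix c'
    assume "c' \<in> cover_iter X S D (Suc n)"
    then obtain c1 d where "c1 \<in> cover_iter X S D n" "d \<in> D"
        and c': "c' = c1 \<inter> {x \<in> topspace X. (S ^^ n) x \<in> d}" "c' \<noteq> {}"
      by (rule cover_iter_SucE)
    then obtain c0 a where "c0 \<in> cover_iter X S A n" "c1 \<subseteq> c0" "a \<in> A" "d \<subseteq> a"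
      using Suc.IH assms unfolding refines_def by blast
    moreover from calculation have sub: "c' \<subseteq> c0 \<inter> {x \<in> topspace X. (S ^^ n) x \<in> a}"
      using c'(1) by blast
    ultimately show "\<exists>c\<in>cover_iter X S A (Suc n). c' \<subseteq> c"
      using c'(2) by (blast intro: cover_iter_SucI)
  qed
qed

lemma refines_cover_iter_self:
  assumes "k > 0"
  shows "refines (cover_iter X S A k) A"
  unfolding refines_def
proof
  fix c
  assume "c \<in> cover_iter X S A k"
  then obtain a where "\<forall>i<k. a i \<in> A" "c = itinerary X S a k"
    by (rule obtain_itinerary)
  with assms have "a 0 \<in> A" "c \<subseteq> a 0"
    by (auto simp: itinerary_def)
  then show "\<exists>U\<in>A. c \<subseteq> U"
    by blast
qed

lemma continuous_map_funpow: "continuous_map X X T \<Longrightarrow> continuous_map X X (T ^^ n)"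
  by (induction n) (simp_all add: continuous_map_compose id_def)

lemma openin_cover_iter:
  assumes T: "continuous_map X X T" and A: "\<And>U. U \<in> A \<Longrightarrow> openin X U"
  shows "c \<in> cover_iter X T A n \<Longrightarrow> openin X c"
proof (induction n arbitrary: c)
  case (Suc n)
  from Suc.prems obtain c' U where "c' \<in> cover_iter X T A n" "U \<in> A"
      and c: "c = c' \<inter> {x \<in> topspace X. (T ^^ n) x \<in> U}"
    by (rule cover_iter_SucE)
  then show ?case
    unfolding c
    by (intro openin_Int Suc.IH openin_continuous_map_preimage[OF continuous_map_funpow[OF T]] A)
qed simp

lemma Union_cover_iter:
  assumes S: "S ` topspace X \<subseteq> topspace X" and A: "\<Union>A = topspace X"
  shows "\<Union>(cover_iter X S A n) = topspace X"
proof (induction n)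
  case (Suc n)
  show ?case
  proof
    show "\<Union>(cover_iter X S A (Suc n)) \<subseteq> topspace X"
    proof (rule Union_least)
      fix c
      assume "c \<in> cover_iter X S A (Suc n)"
      then show "c \<subseteq> topspace X"
        by (rule cover_iter_SucE) blast
    qed
    show "topspace X \<subseteq> \<Union>(cover_iter X S A (Suc n))"
    proof
      fix x
      assume x: "x \<in> topspace X"
      then obtain c U where "c \<in> cover_iter X S A n" "x \<in> c" "U \<in> A" "(S ^^ n) x \<in> U"
        using Suc.IH A funpow_in_topspace[OF S x, of n] by blast
      moreover from this have x_in: "x \<in> c \<inter> {x \<in> topspace X. (S ^^ n) x \<in> U}"
        using x by blast
      ultimately have "c \<inter> {x \<in> topspace X. (S ^^ n) x \<in> U} \<in> cover_iter X S A (Suc n)"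
        by (intro cover_iter_SucI) auto
      with x_in show "x \<in> \<Union>(cover_iter X S A (Suc n))"
        by blast
    qed
  qed
qed simp

section \<open>Entropy of a cover\<close>

lemma itinerary_append:
  assumes S: "S ` topspace X \<subseteq> topspace X"
  shows "itinerary X S a m \<inter> {x \<in> topspace X. (S ^^ m) x \<in> itinerary X S b n} =
    itinerary X S (\<lambda>i. if i < m then a i else b (i - m)) (m + n)"
proof -
  have split: "(\<forall>i<m + n. P i (if i < m then a i else b (i - m))) \<longleftrightarrow>
      (\<forall>i<m. P i (a i)) \<and> (\<forall>j<n. P (j + m) (b j))" for P :: "nat \<Rightarrow> 'a set \<Rightarrow> bool"
  proof (intro iffI conjI allI impI)
    fix i
    assume "\<forall>i<m + n. P i (if i < m then a i else b (i - m))" "i < m"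
    then show "P i (a i)"
      by (auto dest: spec[of _ i])
  next
    fix j
    assume "\<forall>i<m + n. P i (if i < m then a i else b (i - m))" "j < n"
    then show "P (j + m) (b j)"
      by (auto dest: spec[of _ "j + m"])
  next
    fix i
    assume "(\<forall>i<m. P i (a i)) \<and> (\<forall>j<n. P (j + m) (b j))" "i < m + n"
    then show "P i (if i < m then a i else b (i - m))"
      by (cases "i < m") (auto dest: spec[of _ "i - m"])
  qed
  show ?thesis
    unfolding itinerary_def using split[of "\<lambda>i U. (S ^^ i) _ \<in> U"] funpow_in_topspace[OF S]
    by (auto simp: funpow_add)
qed

lemma cover_iter_add_memI:
  assumes S: "S ` topspace X \<subseteq> topspace X"
    and c: "c \<in> cover_iter X S A m" and d: "d \<in> cover_iter X S A n"
    and ne: "c \<inter> {x \<in> topspace X. (S ^^ m) x \<in> d} \<noteq> {}"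
  shows "c \<inter> {x \<in> topspace X. (S ^^ m) x \<in> d} \<in> cover_iter X S A (m + n)"
proof -
  obtain a where a: "\<forall>i<m. a i \<in> A" "c = itinerary X S a m"
    using c by (rule obtain_itinerary)
  obtain b where b: "\<forall>i<n. b i \<in> A" "d = itinerary X S b n"
    using d by (rule obtain_itinerary)
  have "c \<inter> {x \<in> topspace X. (S ^^ m) x \<in> d} =
      itinerary X S (\<lambda>i. if i < m then a i else b (i - m)) (m + n)"
    unfolding a(2) b(2) by (rule itinerary_append[OF S])
  moreover have "(if i < m then a i else b (i - m)) \<in> A" if "i < m + n" for i
    using a(1) b(1) that by auto
  ultimately show ?thesis
    using ne by (simp add: itinerary_in_cover_iter)
qed

lemma cover_num_cover_iter_add_le:
  assumes S: "S ` topspace X \<subseteq> topspace X" and A: "finitely_coverable X A"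
  shows "cover_num X (cover_iter X S A (m + n)) \<le>
    cover_num X (cover_iter X S A m) * cover_num X (cover_iter X S A n)"
proof -
  obtain F where F: "F \<subseteq> cover_iter X S A m" "finite F" "topspace X \<subseteq> \<Union>F"
      and card_F: "card F = cover_num X (cover_iter X S A m)"
    using obtain_minimal_subcover[OF finitely_coverable_cover_iter[OF A S]] by metis
  obtain G where G: "G \<subseteq> cover_iter X S A n" "finite G" "topspace X \<subseteq> \<Union>G"
      and card_G: "card G = cover_num X (cover_iter X S A n)"
    using obtain_minimal_subcover[OF finitely_coverable_cover_iter[OF A S]] by metis
  define f where "f cd = fst cd \<inter> {x \<in> topspace X. (S ^^ m) x \<in> snd cd}" for cd
  have "cover_num X (cover_iter X S A (m + n)) \<le> card (F \<times> G)"
  proof (rule finite_indexed_subcover(2)[where f = f])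
    show "finite (F \<times> G)"
      using F G by simp
    show "f cd \<in> cover_iter X S A (m + n)" if "cd \<in> F \<times> G" "f cd \<noteq> {}" for cd
      using that F(1) G(1) unfolding f_def by (intro cover_iter_add_memI[OF S]) auto
    show "topspace X \<subseteq> \<Union>(f ` (F \<times> G))"
    proof
      fix x
      assume x: "x \<in> topspace X"
      obtain c where "c \<in> F" "x \<in> c"
        using F(3) x by blast
      moreover obtain d where "d \<in> G" "(S ^^ m) x \<in> d"
        using G(3) funpow_in_topspace[OF S x] by blast
      moreover have "x \<in> f (c, d)"
        using calculation x by (simp add: f_def)
      ultimately show "x \<in> \<Union>(f ` (F \<times> G))"
        by blast
    qed
  qed
  then show ?thesis
    using F(2) G(2) card_F card_G by (simp add: card_cartesian_product)
qed

definition cover_entropy :: "'a topology \<Rightarrow> ('a \<Rightarrow> 'a) \<Rightarrow> 'a set set \<Rightarrow> real" where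
  "cover_entropy X S A = lim (\<lambda>n. ln (real (cover_num X (cover_iter X S A n))) / real n)"

lemma cover_entropy_tendsto:
  assumes S: "S ` topspace X \<subseteq> topspace X" and A: "finitely_coverable X A"
  shows "(\<lambda>n. ln (real (cover_num X (cover_iter X S A n))) / real n) \<longlonglongrightarrow> cover_entropy X S A"
proof -
  define u where "u n = ln (real (cover_num X (cover_iter X S A n)))" for n
  have "u (m + n) \<le> u m + u n" for m n
    unfolding u_def
    using ln_of_nat_mono[OF cover_num_cover_iter_add_le[OF S A, of m n]] ln_of_nat_mult_le
    by (rule order_trans)
  then have "(\<lambda>n. u n / real n) \<longlonglongrightarrow> Inf ((\<lambda>n. u n / real n) ` {1..})"
    by (intro fekete_lemma) (simp_all add: u_def ln_of_nat_nonneg)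
  then have "convergent (\<lambda>n. u n / real n)"
    by (rule convergentI)
  then show ?thesis
    unfolding cover_entropy_def u_def by (simp add: convergent_LIMSEQ_iff)
qed

lemma cover_entropy_nonneg:
  assumes "S ` topspace X \<subseteq> topspace X" "finitely_coverable X A"
  shows "0 \<le> cover_entropy X S A"
  using cover_entropy_tendsto[OF assms] by (rule LIMSEQ_le_const) (simp add: ln_of_nat_nonneg)

lemma mem_cover_iter_id:
  assumes "n > 0" "c \<in> A" "c \<noteq> {}" "c \<subseteq> topspace X"
  shows "c \<in> cover_iter X id A n"
proof -
  have "c = itinerary X id (\<lambda>_. c) n"
    using assms(1,4) by (auto simp: itinerary_def)
  with assms(2,3) show ?thesis
    by (metis itinerary_in_cover_iter)
qed

lemma cover_entropy_id:
  assumes A: "finitely_coverable X A" "\<Union>A \<subseteq> topspace X"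
  shows "cover_entropy X id A = 0"
proof -
  obtain B where B: "B \<subseteq> A" "finite B" "topspace X \<subseteq> \<Union>B" "card B = cover_num X A"
    using obtain_minimal_subcover[OF A(1)] by metis
  have "cover_num X (cover_iter X id A n) \<le> cover_num X A" if "n > 0" for n
    unfolding B(4)[symmetric]
  proof (rule finite_indexed_subcover(2)[where f = "\<lambda>c. c"])
    show "c \<in> cover_iter X id A n" if "c \<in> B" "c \<noteq> {}" for c
      using that B(1) A(2) \<open>n > 0\<close> by (intro mem_cover_iter_id) auto
  qed (use B in auto)
  then have bound: "ln (real (cover_num X (cover_iter X id A n))) / real n \<le> ln (real (cover_num X A)) / real n"
    if "n > 0" for n
    using that by (intro divide_right_mono ln_of_nat_mono) auto
  have "(\<lambda>n. ln (real (cover_num X (cover_iter X id A n))) / real n) \<longlonglongrightarrow> 0"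
  proof (rule tendsto_sandwich[OF _ _ tendsto_const lim_const_over_n])
    show "\<forall>\<^sub>F n in sequentially. 0 \<le> ln (real (cover_num X (cover_iter X id A n))) / real n"
      by (simp add: ln_of_nat_nonneg)
    show "\<forall>\<^sub>F n in sequentially. ln (real (cover_num X (cover_iter X id A n))) / real n \<le>
        ln (real (cover_num X A)) / real n"
      using bound by (intro eventually_sequentiallyI[of 1]) auto
  qed
  moreover have "(\<lambda>n. ln (real (cover_num X (cover_iter X id A n))) / real n) \<longlonglongrightarrow> cover_entropy X id A"
    by (rule cover_entropy_tendsto[OF _ A(1)]) simp
  ultimately show ?thesis
    using LIMSEQ_unique by blast
qed

section \<open>Blocks of length k\<close>

lemma all_less_mult_iff:
  "(\<forall>s<n * k. P s) \<longleftrightarrow> (\<forall>t<n. \<forall>i<k. P (t * k + i))" for n k :: nat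
proof (intro iffI allI impI)
  fix t i
  assume all: "\<forall>s<n * k. P s" and "t < n" "i < k"
  have "t * k + i < Suc t * k"
    using \<open>i < k\<close> by simp
  also have "\<dots> \<le> n * k"
    using \<open>t < n\<close> by (intro mult_right_mono) auto
  finally show "P (t * k + i)"
    using all by blast
next
  fix s
  assume "\<forall>t<n. \<forall>i<k. P (t * k + i)" "s < n * k"
  moreover have "k > 0"
    using \<open>s < n * k\<close> by (cases k) auto
  then have "s div k < n" "s mod k < k"
    using \<open>s < n * k\<close> by (auto simp: less_mult_imp_div_less)
  ultimately show "P s"
    by (metis div_mult_mod_eq)
qed

lemma itinerary_funpow_blocks:
  assumes S: "S ` topspace X \<subseteq> topspace X"
  shows "itinerary X (S ^^ k) (\<lambda>t. itinerary X S (b t) k) n =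
    itinerary X S (\<lambda>s. b (s div k) (s mod k)) (n * k)"
proof -
  have "((S ^^ k) ^^ t) x = (S ^^ (t * k)) x" for t x
    by (simp add: funpow_mult mult.commute)
  moreover have "(S ^^ i) ((S ^^ (t * k)) x) = (S ^^ (t * k + i)) x" for i t x
    by (simp add: funpow_add add.commute)
  moreover have "(t * k + i) div k = t" "(t * k + i) mod k = i" if "i < k" for t i
    using that by auto
  ultimately show ?thesis
    unfolding itinerary_def all_less_mult_iff using funpow_in_topspace[OF S]
    by auto
qed

lemma cover_iter_funpow_subset_cover_iter_mult:
  assumes S: "S ` topspace X \<subseteq> topspace X" and k: "k > 0"
  shows "cover_iter X (S ^^ k) (cover_iter X S A k) n \<subseteq> cover_iter X S A (n * k)"
proof
  fix c
  assume c_mem: "c \<in> cover_iter X (S ^^ k) (cover_iter X S A k) n"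
  then obtain d where d: "\<forall>t<n. d t \<in> cover_iter X S A k" "c = itinerary X (S ^^ k) d n"
    by (rule obtain_itinerary)
  have ne: "n > 0 \<Longrightarrow> c \<noteq> {}"
    using c_mem unfolding mem_cover_iter_iff by auto
  have "\<forall>t. \<exists>b. t < n \<longrightarrow> (\<forall>i<k. b i \<in> A) \<and> d t = itinerary X S b k"
    using d(1) by (metis obtain_itinerary)
  then obtain b where b: "\<And>t i. t < n \<Longrightarrow> i < k \<Longrightarrow> b t i \<in> A"
      "\<And>t. t < n \<Longrightarrow> d t = itinerary X S (b t) k"
    by metis
  have "c = itinerary X S (\<lambda>s. b (s div k) (s mod k)) (n * k)"
    unfolding d(2) itinerary_funpow_blocks[OF S, symmetric] by (rule itinerary_cong) (use b(2) in auto)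
  moreover have "b (s div k) (s mod k) \<in> A" if "s < n * k" for s
    using b(1) that k by (simp add: less_mult_imp_div_less)
  ultimately show "c \<in> cover_iter X S A (n * k)"
    unfolding mem_cover_iter_iff using ne by (intro exI[of _ "\<lambda>s. b (s div k) (s mod k)"]) auto
qed

lemma cover_iter_mult_subset_cover_iter_funpow:
  assumes S: "S ` topspace X \<subseteq> topspace X" and k: "k > 0"
  shows "cover_iter X S A (n * k) \<subseteq> cover_iter X (S ^^ k) (cover_iter X S A k) n"
proof
  fix c
  assume c_mem: "c \<in> cover_iter X S A (n * k)"
  then obtain a where a: "\<forall>s<n * k. a s \<in> A" "c = itinerary X S a (n * k)"
    by (rule obtain_itinerary)
  have ne: "n > 0 \<Longrightarrow> c \<noteq> {}"
    using c_mem k unfolding mem_cover_iter_iff by auto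
  define d where "d t = itinerary X S (\<lambda>i. a (t * k + i)) k" for t
  have c: "c = itinerary X (S ^^ k) d n"
    unfolding a(2) d_def itinerary_funpow_blocks[OF S] by simp
  have "d t \<in> cover_iter X S A k" if "t < n" for t
    unfolding d_def
  proof (rule itinerary_in_cover_iter)
    show "a (t * k + i) \<in> A" if "i < k" for i
      using a(1) \<open>t < n\<close> that unfolding all_less_mult_iff by blast
    obtain x where "x \<in> c"
      using ne \<open>t < n\<close> by fastforce
    then have "((S ^^ k) ^^ t) x \<in> d t"
      using \<open>t < n\<close> by (simp add: c itinerary_def)
    then show "itinerary X S (\<lambda>i. a (t * k + i)) k \<noteq> {}"
      unfolding d_def by blast
  qed
  then show "c \<in> cover_iter X (S ^^ k) (cover_iter X S A k) n"
    unfolding mem_cover_iter_iff using ne by (intro exI[of _ d]) (auto simp: c)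
qed

lemma cover_iter_funpow_mult:
  assumes "S ` topspace X \<subseteq> topspace X" "k > 0"
  shows "cover_iter X (S ^^ k) (cover_iter X S A k) n = cover_iter X S A (n * k)"
  using cover_iter_funpow_subset_cover_iter_mult[OF assms] cover_iter_mult_subset_cover_iter_funpow[OF assms]
  by (rule equalityI)

lemma cover_entropy_funpow_le:
  assumes S: "S ` topspace X \<subseteq> topspace X" and k: "k > 0" and A: "finitely_coverable X A"
  shows "cover_entropy X (S ^^ k) A \<le> real k * cover_entropy X S A"
proof -
  have Sk: "(S ^^ k) ` topspace X \<subseteq> topspace X"
    using funpow_in_topspace[OF S] by blast
  have "cover_num X (cover_iter X (S ^^ k) A n) \<le> cover_num X (cover_iter X S A (n * k))" for n
  proof -
    have "refines (cover_iter X (S ^^ k) (cover_iter X S A k) n) (cover_iter X (S ^^ k) A n)"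
      by (intro refines_cover_iter refines_cover_iter_self k)
    moreover have "finitely_coverable X (cover_iter X (S ^^ k) (cover_iter X S A k) n)"
      by (intro finitely_coverable_cover_iter A S Sk)
    ultimately show ?thesis
      unfolding cover_iter_funpow_mult[OF S k, symmetric] by (rule cover_num_le_if_refines)
  qed
  then have "ln (real (cover_num X (cover_iter X (S ^^ k) A n))) / real n \<le>
      ln (real (cover_num X (cover_iter X S A (n * k)))) / real n" for n
    by (intro divide_right_mono ln_of_nat_mono) auto
  then show ?thesis
    by (intro LIMSEQ_le[OF cover_entropy_tendsto[OF Sk A]
          tendsto_mult_index_over_n[OF cover_entropy_tendsto[OF S A] k]]) auto
qed

section \<open>The lower bound\<close>

lemma obtain_window_pattern:
  fixes lossy :: "nat \<Rightarrow> bool" and lab :: "nat \<Rightarrow> 'b"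
  assumes R: "R > 0"
    and sep: "\<And>t t'. lossy t \<Longrightarrow> lossy t' \<Longrightarrow> t < t' \<Longrightarrow> t + R \<le> t'"
    and lab: "\<And>t. lossy t \<Longrightarrow> lab t \<in> Y"
  obtains p where "p \<in> PiE {..<q} (\<lambda>_. insert None (Some ` ({..<R} \<times> Y)))"
    "\<And>t. t < q * R \<Longrightarrow> lossy t \<Longrightarrow> p (t div R) = Some (t mod R, lab t)"
    "\<And>t y. t < q * R \<Longrightarrow> \<not> lossy t \<Longrightarrow> p (t div R) \<noteq> Some (t mod R, y)"
proof -
  have unique: "r = r'" if "r < R" "r' < R" "lossy (w * R + r)" "lossy (w * R + r')" for w r r'
    using sep[OF that(3,4)] sep[OF that(4,3)] that(1,2) by (cases r r' rule: linorder_cases) auto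
  define off where "off w = (SOME r. r < R \<and> lossy (w * R + r))" for w
  have off: "off w < R \<and> lossy (w * R + off w)" if "\<exists>r<R. lossy (w * R + r)" for w
    unfolding off_def by (rule someI_ex) (use that in blast)
  define p where "p w = (if w < q then if \<exists>r<R. lossy (w * R + r)
      then Some (off w, lab (w * R + off w)) else None else undefined)" for w
  have window: "t = t div R * R + t mod R" "t mod R < R" "t div R < q" if "t < q * R" for t
    using R that by (auto simp: less_mult_imp_div_less)
  show ?thesis
  proof (rule that)
    show "p \<in> PiE {..<q} (\<lambda>_. insert None (Some ` ({..<R} \<times> Y)))"
      using off lab by (auto simp: p_def PiE_iff extensional_def)
    show "p (t div R) = Some (t mod R, lab t)" if "t < q * R" "lossy t" for t
    proof -
      have "off (t div R) = t mod R"
        using unique off window[OF that(1)] that(2) by metis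
      then show ?thesis
        using window[OF that(1)] that(2) unfolding p_def by auto
    qed
    show "p (t div R) \<noteq> Some (t mod R, y)" if "t < q * R" "\<not> lossy t" for t y
    proof
      assume "p (t div R) = Some (t mod R, y)"
      then have "\<exists>r<R. lossy (t div R * R + r)" "off (t div R) = t mod R"
        using window[OF that(1)] unfolding p_def by (auto split: if_splits)
      then show False
        using off window[OF that(1)] that(2) by metis
    qed
  qed
qed

text \<open>A pattern \<open>p\<close> has one entry per window of \<open>R\<close> consecutive times; \<open>Some (r, d)\<close>
  singles out the \<open>r\<close>-th time of the window as the one where \<open>d\<close> is used instead of \<open>D0\<close>.\<close>
definition window_patch ::
    "'a set set \<Rightarrow> 'a set \<Rightarrow> nat \<Rightarrow> (nat \<Rightarrow> 'a set) \<Rightarrow> (nat \<Rightarrow> (nat \<times> 'a set) option) \<Rightarrow> nat \<Rightarrow> 'a set"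
  where
  "window_patch D D0 R e p t =
    (if e t \<in> D then e t
     else case p (t div R) of Some (r, d) \<Rightarrow> if r = t mod R then d else D0 | None \<Rightarrow> D0)"

lemma mem_window_patch:
  assumes "y \<in> e t" "e t \<in> insert V D" "V - B \<subseteq> D0"
    and "e t \<notin> D \<Longrightarrow> y \<in> B \<Longrightarrow> \<exists>d. p (t div R) = Some (t mod R, d) \<and> y \<in> d"
    and "e t \<notin> D \<Longrightarrow> y \<notin> B \<Longrightarrow> \<forall>d. p (t div R) \<noteq> Some (t mod R, d)"
  shows "y \<in> window_patch D D0 R e p t"
  using assms by (cases "y \<in> B") (auto simp: window_patch_def split: option.split)

lemma mem_itinerary_window_patch:
  assumes S: "S ` topspace X \<subseteq> topspace X" and R: "R > 0"
    and F: "F \<subseteq> D" "topspace X \<subseteq> \<Union>F" and D0: "V - B \<subseteq> D0"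
    and sep: "\<And>y j. y \<in> topspace X \<Longrightarrow> y \<in> V \<Longrightarrow> y \<in> B \<Longrightarrow> 0 < j \<Longrightarrow> j < R \<Longrightarrow> (S ^^ j) y \<notin> V"
    and e: "\<forall>t<q * R. e t \<in> insert V D" and x: "x \<in> itinerary X S e (q * R)"
  obtains p where "p \<in> PiE {..<q} (\<lambda>_. insert None (Some ` ({..<R} \<times> F)))"
    "x \<in> itinerary X S (window_patch D D0 R e p) (q * R)"
proof -
  have orbit: "(S ^^ t) x \<in> topspace X" "t < q * R \<Longrightarrow> (S ^^ t) x \<in> e t" for t
    using x funpow_in_topspace[OF S] by (auto simp: itinerary_def)
  \<comment> \<open>the times at which \<open>D0\<close> cannot replace the letter \<open>V\<close>\<close>
  define lossy where "lossy t \<longleftrightarrow> t < q * R \<and> e t \<notin> D \<and> (S ^^ t) x \<in> B" for t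
  have lossy_V: "(S ^^ t) x \<in> V" if "lossy t" for t
    using that e orbit(2)[of t] unfolding lossy_def by auto
  have lossy_sep: "t + R \<le> t'" if "lossy t" "lossy t'" "t < t'" for t t'
  proof (rule ccontr)
    assume "\<not> t + R \<le> t'"
    then have "(S ^^ (t' - t)) ((S ^^ t) x) \<notin> V"
      using that lossy_V[of t] orbit(1) unfolding lossy_def by (intro sep) auto
    moreover have "(S ^^ (t' - t)) ((S ^^ t) x) = (S ^^ t') x"
      using \<open>t < t'\<close> by (simp flip: comp_apply[of "S ^^ _" "S ^^ _"] funpow_add)
    ultimately show False
      using lossy_V[OF that(2)] by simp
  qed
  define lab where "lab t = (SOME d. d \<in> F \<and> (S ^^ t) x \<in> d)" for t
  have lab: "lab t \<in> F \<and> (S ^^ t) x \<in> lab t" for t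
    unfolding lab_def by (rule someI_ex) (use F(2) orbit(1) in blast)
  obtain p where p: "p \<in> PiE {..<q} (\<lambda>_. insert None (Some ` ({..<R} \<times> F)))"
      "\<And>t. t < q * R \<Longrightarrow> lossy t \<Longrightarrow> p (t div R) = Some (t mod R, lab t)"
      "\<And>t y. t < q * R \<Longrightarrow> \<not> lossy t \<Longrightarrow> p (t div R) \<noteq> Some (t mod R, y)"
    using obtain_window_pattern[OF R lossy_sep, where lab = lab and Y = F and q = q] lab by blast
  have "(S ^^ t) x \<in> window_patch D D0 R e p t" if "t < q * R" for t
    using orbit(2)[OF that] e that D0 p(2,3)[OF that] lab[of t]
    by (intro mem_window_patch) (auto simp: lossy_def)
  with x have "x \<in> itinerary X S (window_patch D D0 R e p) (q * R)"
    by (simp add: itinerary_def)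
  with p(1) show ?thesis
    by (rule that)
qed

lemma window_patch_in_cover_iter:
  assumes R: "R > 0" and p: "p \<in> PiE {..<q} (\<lambda>_. insert None (Some ` ({..<R} \<times> F)))"
    and F: "F \<subseteq> D" and D0: "D0 \<noteq> {} \<Longrightarrow> D0 \<in> D"
    and ne: "itinerary X S (window_patch D D0 R e p) (q * R) \<noteq> {}"
  shows "itinerary X S (window_patch D D0 R e p) (q * R) \<in> cover_iter X S D (q * R)"
proof (rule itinerary_in_cover_iter[OF _ ne])
  fix t
  assume "t < q * R"
  then have "p (t div R) \<in> insert None (Some ` ({..<R} \<times> F))"
    using p R by (auto simp: PiE_iff less_mult_imp_div_less)
  then have "window_patch D D0 R e p t \<in> insert D0 D"
    unfolding window_patch_def using F by (auto split: option.split)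
  moreover have "window_patch D D0 R e p t \<noteq> {}"
    using ne \<open>t < q * R\<close> by (auto simp: itinerary_def)
  ultimately show "window_patch D D0 R e p t \<in> D"
    using D0 by (metis insertE)
qed

lemma card_window_patterns:
  assumes "finite F"
  shows "card (PiE {..<q} (\<lambda>_. insert None (Some ` ({..<R} \<times> F)))) = (1 + R * card F) ^ q"
  using assms by (simp add: card_PiE card_image card_cartesian_product)

text \<open>In the application \<open>S = T^k\<close>, \<open>D = A^k_T\<close>, \<open>V = X - L\<close>, \<open>D0 = U0 \<inter> \<dots> \<inter> T^-(k-1) U0\<close>, and \<open>B\<close>
  consists of the points whose orbit enters \<open>K\<close> within the next \<open>k - 1\<close> steps.\<close>

lemma cover_num_cover_iter_le_insert:
  assumes S: "S ` topspace X \<subseteq> topspace X" and R: "R > 0"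
    and F: "F \<subseteq> D" "finite F" "topspace X \<subseteq> \<Union>F"
    and D0: "V - B \<subseteq> D0" "D0 \<noteq> {} \<Longrightarrow> D0 \<in> D"
    and sep: "\<And>y j. y \<in> topspace X \<Longrightarrow> y \<in> V \<Longrightarrow> y \<in> B \<Longrightarrow> 0 < j \<Longrightarrow> j < R \<Longrightarrow> (S ^^ j) y \<notin> V"
  shows "cover_num X (cover_iter X S D (q * R)) \<le>
    cover_num X (cover_iter X S (insert V D) (q * R)) * (1 + R * card F) ^ q"
proof -
  define n where "n = q * R"
  define Pat where "Pat = PiE {..<q} (\<lambda>_. insert None (Some ` ({..<R} \<times> F)))"
  have "finitely_coverable X (insert V D)"
    using F unfolding finitely_coverable_def by blast
  then obtain G where G: "G \<subseteq> cover_iter X S (insert V D) n" "finite G" "topspace X \<subseteq> \<Union>G"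
      and card_G: "card G = cover_num X (cover_iter X S (insert V D) n)"
    using obtain_minimal_subcover[OF finitely_coverable_cover_iter[OF _ S]] by metis
  have "\<forall>W. \<exists>e. W \<in> G \<longrightarrow> (\<forall>t<n. e t \<in> insert V D) \<and> W = itinerary X S e n"
    using G(1) by (metis obtain_itinerary subsetD)
  then obtain e where e: "\<And>W. W \<in> G \<Longrightarrow> \<forall>t<n. e W t \<in> insert V D"
      "\<And>W. W \<in> G \<Longrightarrow> W = itinerary X S (e W) n"
    by metis
  define f where "f Wp = itinerary X S (window_patch D D0 R (e (fst Wp)) (snd Wp)) n" for Wp
  have "cover_num X (cover_iter X S D n) \<le> card (G \<times> Pat)"
  proof (rule finite_indexed_subcover(2)[where f = f])
    show "finite (G \<times> Pat)"
      using G(2) F(2) by (simp add: Pat_def finite_PiE)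
    show "f Wp \<in> cover_iter X S D n" if "Wp \<in> G \<times> Pat" "f Wp \<noteq> {}" for Wp
      unfolding f_def n_def
    proof (rule window_patch_in_cover_iter[OF R _ F(1) D0(2)])
      show "snd Wp \<in> PiE {..<q} (\<lambda>_. insert None (Some ` ({..<R} \<times> F)))"
        using that(1) by (auto simp: Pat_def)
      show "itinerary X S (window_patch D D0 R (e (fst Wp)) (snd Wp)) (q * R) \<noteq> {}"
        using that(2) unfolding f_def n_def .
    qed
    show "topspace X \<subseteq> \<Union>(f ` (G \<times> Pat))"
    proof
      fix x
      assume "x \<in> topspace X"
      then obtain W where W: "W \<in> G" "x \<in> W"
        using G(3) by blast
      then have "x \<in> itinerary X S (e W) (q * R)"
        using e(2) by (simp add: n_def)
      then obtain p where "p \<in> Pat" "x \<in> f (W, p)"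
        using mem_itinerary_window_patch[OF S R F(1,3) D0(1) sep e(1)[OF W(1), unfolded n_def]]
        unfolding Pat_def f_def n_def by auto
      with W(1) show "x \<in> \<Union>(f ` (G \<times> Pat))"
        by blast
    qed
  qed
  then show ?thesis
    using card_G G(2) F(2) by (simp add: n_def Pat_def card_cartesian_product card_window_patterns)
qed

lemma funpow_mult_mem_Union_funpow_image:
  assumes "(T ^^ i) y \<in> K" "i < k" "0 < j" "j < R"
  shows "((T ^^ k) ^^ j) y \<in> (\<Union>l<k * R. (T ^^ l) ` K)"
proof -
  have "k \<le> j * k"
    using assms(3) by simp
  with assms(2) have "i \<le> j * k"
    by linarith
  then have "((T ^^ k) ^^ j) y = (T ^^ (j * k - i + i)) y"
    by (simp add: funpow_mult mult.commute)
  also have "\<dots> = (T ^^ (j * k - i)) ((T ^^ i) y)"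
    by (simp add: funpow_add)
  finally have "((T ^^ k) ^^ j) y \<in> (T ^^ (j * k - i)) ` K"
    using assms(1) by blast
  moreover have "j * k < R * k"
    using assms(2-4) by simp
  then have "j * k - i < k * R"
    by (simp add: mult.commute less_imp_diff_less)
  ultimately show ?thesis
    by blast
qed

lemma cover_num_cover_iter_funpow_insert_le:
  assumes T: "T ` topspace X \<subseteq> topspace X" and k: "k > 0" and R: "R > 0"
    and A: "finitely_coverable X A" and U0: "U0 \<in> A"
  defines "L \<equiv> \<Union>j<k * R. (T ^^ j) ` (topspace X - U0)"
  shows "cover_num X (cover_iter X T A (q * R * k)) \<le>
    cover_num X (cover_iter X (T ^^ k) (insert (topspace X - L) (cover_iter X T A k)) (q * R)) *
    (1 + R * cover_num X (cover_iter X T A k)) ^ q"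
proof -
  define B where "B = {y \<in> topspace X. \<exists>i. 0 < i \<and> i < k \<and> (T ^^ i) y \<in> topspace X - U0}"
  define D0 where "D0 = itinerary X T (\<lambda>_. U0) k"
  have Tk: "(T ^^ k) ` topspace X \<subseteq> topspace X"
    using funpow_in_topspace[OF T] by blast
  obtain F where F: "F \<subseteq> cover_iter X T A k" "finite F" "topspace X \<subseteq> \<Union>F"
      and card_F: "card F = cover_num X (cover_iter X T A k)"
    using obtain_minimal_subcover[OF finitely_coverable_cover_iter[OF A T]] by metis
  have "(T ^^ 0) ` (topspace X - U0) \<subseteq> L"
    unfolding L_def using k R by (intro UN_upper) simp
  then have U0_of_not_L: "y \<in> U0" if "y \<in> topspace X - L" for y
    using that by auto
  have "(T ^^ i) y \<in> U0" if "y \<in> topspace X - L - B" "i < k" for y i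
    using that U0_of_not_L funpow_in_topspace[OF T, where x = y and i = i] unfolding B_def
    by (cases "i = 0") auto
  then have "topspace X - L - B \<subseteq> D0"
    unfolding D0_def itinerary_def by blast
  moreover have "D0 \<noteq> {} \<Longrightarrow> D0 \<in> cover_iter X T A k"
    unfolding D0_def using U0 by (simp add: itinerary_in_cover_iter)
  moreover have "((T ^^ k) ^^ j) y \<notin> topspace X - L" if "y \<in> B" "0 < j" "j < R" for y j
    using that funpow_mult_mem_Union_funpow_image[where K = "topspace X - U0"]
    unfolding B_def L_def by blast
  ultimately have "cover_num X (cover_iter X (T ^^ k) (cover_iter X T A k) (q * R)) \<le>
      cover_num X (cover_iter X (T ^^ k) (insert (topspace X - L) (cover_iter X T A k)) (q * R)) *
      (1 + R * card F) ^ q"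
    by (intro cover_num_cover_iter_le_insert[OF Tk R F]) auto
  then show ?thesis
    unfolding card_F cover_iter_funpow_mult[OF T k] .
qed

lemma admissible_imp_finitely_coverable:
  assumes "admissible_open_cover X A"
  shows "finitely_coverable X A"
proof -
  obtain U0 where U0: "U0 \<in> A" "compactin X (topspace X - U0)"
    using assms unfolding admissible_open_cover_def by blast
  moreover have "\<And>U. U \<in> A \<Longrightarrow> openin X U" "topspace X - U0 \<subseteq> \<Union>A"
    using assms unfolding admissible_open_cover_def by auto
  ultimately obtain F where "finite F" "F \<subseteq> A" "topspace X - U0 \<subseteq> \<Union>F"
    using compactinD by metis
  with U0(1) show ?thesis
    unfolding finitely_coverable_def by (intro exI[of _ "insert U0 F"]) auto
qed

lemma compactin_Union_funpow_image:
  "continuous_map X X T \<Longrightarrow> compactin X K \<Longrightarrow> compactin X (\<Union>j<m. (T ^^ j) ` K)"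
  by (intro compactin_Union) (auto intro: image_compactin continuous_map_funpow)

lemma admissible_open_cover_insert:
  assumes "Hausdorff_space X" "compactin X L" "\<And>U. U \<in> D \<Longrightarrow> openin X U" "\<Union>D = topspace X"
  shows "admissible_open_cover X (insert (topspace X - L) D)"
proof -
  have "openin X (topspace X - L)"
    using assms(1,2) by (intro openin_diff openin_topspace compactin_imp_closedin)
  moreover have "topspace X - (topspace X - L) = L"
    using compactin_subset_topspace[OF assms(2)] by blast
  ultimately show ?thesis
    unfolding admissible_open_cover_def using assms(2-4) by auto
qed

lemma admissible_open_cover_insert_cover_iter:
  assumes T: "continuous_map X X T" and H: "Hausdorff_space X" and A: "admissible_open_cover X A"
    and L: "compactin X L"
  shows "admissible_open_cover X (insert (topspace X - L) (cover_iter X T A k))"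
proof (rule admissible_open_cover_insert[OF H L])
  show "openin X U" if "U \<in> cover_iter X T A k" for U
    by (rule openin_cover_iter[OF T _ that]) (use A in \<open>auto simp: admissible_open_cover_def\<close>)
  show "\<Union>(cover_iter X T A k) = topspace X"
    by (rule Union_cover_iter) (use A T in \<open>auto simp: admissible_open_cover_def continuous_map_def\<close>)
qed

lemma cover_entropy_funpow_ge_approx:
  assumes T: "continuous_map X X T" and H: "Hausdorff_space X" and A: "admissible_open_cover X A"
    and k: "k > 0" and R: "R > 0"
  obtains E where "admissible_open_cover X E"
    "real k * cover_entropy X T A \<le>
      cover_entropy X (T ^^ k) E + ln (1 + real R * real (cover_num X (cover_iter X T A k))) / real R"
proof -
  have Tm: "T ` topspace X \<subseteq> topspace X"
    using T by (simp add: continuous_map_image_subset_topspace)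
  have Tk: "(T ^^ k) ` topspace X \<subseteq> topspace X"
    using funpow_in_topspace[OF Tm] by blast
  have fA: "finitely_coverable X A"
    by (rule admissible_imp_finitely_coverable[OF A])
  obtain U0 where U0: "U0 \<in> A" "compactin X (topspace X - U0)"
    using A unfolding admissible_open_cover_def by blast
  define L where "L = (\<Union>j<k * R. (T ^^ j) ` (topspace X - U0))"
  define E where "E = insert (topspace X - L) (cover_iter X T A k)"
  have E: "admissible_open_cover X E"
    unfolding E_def L_def
    by (intro admissible_open_cover_insert_cover_iter[OF T H A] compactin_Union_funpow_image[OF T U0(2)])
  define C where "C = 1 + R * cover_num X (cover_iter X T A k)"
  have "ln (real (cover_num X (cover_iter X T A (q * (R * k))))) \<le>
      ln (real (cover_num X (cover_iter X (T ^^ k) E (q * R)))) + real q * ln (real C)" for q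
  proof -
    have "ln (real (cover_num X (cover_iter X T A (q * (R * k))))) \<le>
        ln (real (cover_num X (cover_iter X (T ^^ k) E (q * R)) * C ^ q))"
      unfolding C_def E_def L_def mult.assoc[symmetric]
      by (intro ln_of_nat_mono cover_num_cover_iter_funpow_insert_le[OF Tm k R fA U0(1)])
    also have "\<dots> \<le> ln (real (cover_num X (cover_iter X (T ^^ k) E (q * R)))) + ln (real (C ^ q))"
      by (rule ln_of_nat_mult_le)
    also have "ln (real (C ^ q)) = real q * ln (real C)"
      by (simp add: C_def ln_realpow)
    finally show ?thesis .
  qed
  then have "real k * cover_entropy X T A \<le> cover_entropy X (T ^^ k) E + ln (real C) / real R"
    using cover_entropy_tendsto[OF Tm fA] cover_entropy_tendsto[OF Tk admissible_imp_finitely_coverable[OF E]]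
    by (intro le_of_tendsto_block_bound[OF _ _ k R])
  with E show ?thesis
    by (intro that) (simp_all add: C_def)
qed

section \<open>Topological entropy\<close>

lemma top_entropy_eq_SUP:
  "top_entropy X S = (SUP A\<in>{A. admissible_open_cover X A}. ereal (cover_entropy X S A))"
  by (simp add: top_entropy_def cover_entropy_def)

lemma admissible_open_cover_topspace: "admissible_open_cover X {topspace X}"
  by (simp add: admissible_open_cover_def)

lemma cover_entropy_le_top_entropy:
  "admissible_open_cover X A \<Longrightarrow> ereal (cover_entropy X S A) \<le> top_entropy X S"
  unfolding top_entropy_eq_SUP by (rule SUP_upper) simp

lemma top_entropy_id: "top_entropy X id = 0"
proof -
  have "cover_entropy X id A = 0" if A: "admissible_open_cover X A" for A
  proof (rule cover_entropy_id)
    show "finitely_coverable X A"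
      using A by (rule admissible_imp_finitely_coverable)
    show "\<Union>A \<subseteq> topspace X"
      using A by (simp add: admissible_open_cover_def)
  qed
  then have "top_entropy X id = (SUP A\<in>{A. admissible_open_cover X A}. 0)"
    unfolding top_entropy_eq_SUP by (intro SUP_cong) auto
  also have "\<dots> = 0"
    by (rule SUP_const) (use admissible_open_cover_topspace in blast)
  finally show ?thesis .
qed

lemma top_entropy_funpow_le:
  assumes T: "T ` topspace X \<subseteq> topspace X" and k: "k > 0"
  shows "top_entropy X (T ^^ k) \<le> ereal (real k) * top_entropy X T"
  unfolding top_entropy_eq_SUP[of X "T ^^ k"]
proof (rule SUP_least)
  fix A
  assume "A \<in> {A. admissible_open_cover X A}"
  then have A: "admissible_open_cover X A"
    by simp
  have "ereal (cover_entropy X (T ^^ k) A) \<le> ereal (real k * cover_entropy X T A)"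
    using cover_entropy_funpow_le[OF T k admissible_imp_finitely_coverable[OF A]] by simp
  also have "\<dots> = ereal (real k) * ereal (cover_entropy X T A)"
    by simp
  also have "\<dots> \<le> ereal (real k) * top_entropy X T"
    by (intro ereal_mult_left_mono cover_entropy_le_top_entropy A) simp
  finally show "ereal (cover_entropy X (T ^^ k) A) \<le> ereal (real k) * top_entropy X T" .
qed

lemma top_entropy_funpow_ge:
  assumes T: "continuous_map X X T" and H: "Hausdorff_space X" and k: "k > 0"
  shows "ereal (real k) * top_entropy X T \<le> top_entropy X (T ^^ k)"
proof -
  have Tm: "T ` topspace X \<subseteq> topspace X"
    using T by (simp add: continuous_map_image_subset_topspace)
  have "ereal (real k) * top_entropy X T =
      (SUP A\<in>{A. admissible_open_cover X A}. ereal (real k) * ereal (cover_entropy X T A))"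
    unfolding top_entropy_eq_SUP
    using admissible_open_cover_topspace cover_entropy_nonneg[OF Tm admissible_imp_finitely_coverable]
    by (intro SUP_ereal_mult_left[symmetric]) auto
  also have "\<dots> \<le> top_entropy X (T ^^ k)"
  proof (rule SUP_least)
    fix A
    assume "A \<in> {A. admissible_open_cover X A}"
    then have A: "admissible_open_cover X A"
      by simp
    define c where "c R = ln (1 + real R * real (cover_num X (cover_iter X T A k))) / real R" for R
    have "ereal (real k * cover_entropy X T A) \<le> top_entropy X (T ^^ k) + ereal e" if "e > 0" for e
    proof -
      have "c \<longlonglongrightarrow> 0"
        unfolding c_def by (rule ln_one_plus_mult_over_tendsto_zero) simp
      from order_tendstoD(2)[OF this that] obtain N where "\<And>R. R \<ge> N \<Longrightarrow> c R < e"
        by (auto simp: eventually_sequentially)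
      then obtain R where R: "R > 0" "c R < e"
        by (metis le_add2 zero_less_Suc plus_1_eq_Suc)
      obtain E where E: "admissible_open_cover X E" "real k * cover_entropy X T A \<le> cover_entropy X (T ^^ k) E + c R"
        unfolding c_def by (rule cover_entropy_funpow_ge_approx[OF T H A k R(1)])
      have "ereal (real k * cover_entropy X T A) \<le> ereal (cover_entropy X (T ^^ k) E) + ereal e"
        using E(2) R(2) by simp
      also have "\<dots> \<le> top_entropy X (T ^^ k) + ereal e"
        by (intro add_right_mono cover_entropy_le_top_entropy E(1))
      finally show ?thesis .
    qed
    then have "ereal (real k * cover_entropy X T A) \<le> top_entropy X (T ^^ k)"
      by (rule ereal_le_epsilon2)
    then show "ereal (real k) * ereal (cover_entropy X T A) \<le> top_entropy X (T ^^ k)"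
      by simp
  qed
  finally show ?thesis .
qed

theorem corollary3p4:
  fixes X :: "'a topology" and T :: "'a \<Rightarrow> 'a" and k :: nat
  assumes "metrizable_space X" and "locally_compact_space X" and "separable_space X"
    and "continuous_map X X T"
  shows "top_entropy X (T ^^ k) = ereal (real k) * top_entropy X T"
proof (cases "k = 0")
  case True
  then show ?thesis
    by (simp add: top_entropy_id)
next
  case False
  have "T ` topspace X \<subseteq> topspace X"
    using assms(4) by (simp add: continuous_map_image_subset_topspace)
  moreover have "Hausdorff_space X"
    by (rule metrizable_imp_Hausdorff_space[OF assms(1)])
  ultimately show ?thesis
    using False assms(4) by (intro antisym top_entropy_funpow_le top_entropy_funpow_ge) auto
qed

end
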